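(* $\mathrm{add}^{*}(\mathcal{S}pl)=\mathrm{non}^{*}(\mathcal{S}pl)=\omega$. In particular, $\mathcal{S}pl$ is not a $P$-ideal.
   Context: For an infinite $A\subseteq\omega$, let $S(A)$ be the set of all $\sigma\in2^{<\omega}$ such that $\sigma$ is constant on $A\cap\mathrm{dom}(\sigma)$. The splitting ideal $\mathcal{S}pl$ is the ideal on $2^{<\omega}$ generated by the sets $S(A)$, $A\in[\omega]^{\omega}$. For an ideal $\mathcal{J}$ on a countable set $X$: $\mathrm{add}^*(\mathcal{J})=\min\{|\mathcal{F}|:\mathcal{F}\subseteq\mathcal{J}$ and for every $Y\in\mathcal{J}$ there is $F\in\mathcal{F}$ with $F\not\subseteq^{*}Y\}$; $\mathrm{non}^*(\mathcal{J})=\min\{|\mathcal{F}|:\mathcal{F}\subseteq[X]^{\omega}$ and for every $Y\in\mathcal{J}$ there is $F\in\mathcal{F}$ with $F\cap Y$ finite$\}$. A $P$-ideal is an ideal $\mathcal{J}$ such that for every countable $\{A_n\}\subseteq\mathcal{J}$ there is $B\in\mathcal{J}$ with $A_n\subseteq^* B$ for all $n$. *)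

theory Defs
  imports Main "HOL-Library.Countable_Set"
begin

text \<open>Elements of 2^{<omega} are finite binary sequences, represented as bool lists;
  the domain of sigma is the initial segment {0..<length sigma}.\<close>

definition S :: "nat set \<Rightarrow> bool list set" where
  "S A = {\<sigma>. \<forall>i\<in>A. \<forall>j\<in>A. i < length \<sigma> \<longrightarrow> j < length \<sigma> \<longrightarrow> \<sigma> ! i = \<sigma> ! j}"

definition ideal_generated :: "'a set set \<Rightarrow> 'a set set" where
  "ideal_generated G = {Y. \<exists>H. finite H \<and> H \<subseteq> G \<and> Y \<subseteq> \<Union>H}"

definition Spl :: "bool list set set" where
  "Spl = ideal_generated {S A | A. infinite A}"

definition almost_subset :: "'a set \<Rightarrow> 'a set \<Rightarrow> bool" (infix "\<subseteq>\<^sup>*" 50) where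
  "F \<subseteq>\<^sup>* Y \<longleftrightarrow> finite (F - Y)"

text \<open>Families witnessing add^*(J) and non^*(J) (the invariants are the least
  cardinalities of such families); the ideal J lives on the countable set UNIV :: 'a set.\<close>
definition add_star_family :: "'a set set \<Rightarrow> 'a set set \<Rightarrow> bool" where
  "add_star_family J \<F> \<longleftrightarrow> \<F> \<subseteq> J \<and> (\<forall>Y\<in>J. \<exists>F\<in>\<F>. \<not> F \<subseteq>\<^sup>* Y)"

definition non_star_family :: "'a set set \<Rightarrow> 'a set set \<Rightarrow> bool" where
  "non_star_family J \<F> \<longleftrightarrow> (\<forall>F\<in>\<F>. infinite F) \<and> (\<forall>Y\<in>J. \<exists>F\<in>\<F>. finite (F \<inter> Y))"

definition min_card_is_omega :: "('a set set \<Rightarrow> bool) \<Rightarrow> bool" where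
  "min_card_is_omega P \<longleftrightarrow> (\<exists>\<F>. P \<F> \<and> countable \<F>) \<and> (\<forall>\<F>. P \<F> \<longrightarrow> infinite \<F>)"

definition P_ideal :: "'a set set \<Rightarrow> bool" where
  "P_ideal J \<longleftrightarrow> (\<forall>A :: nat \<Rightarrow> 'a set. range A \<subseteq> J \<longrightarrow> (\<exists>B\<in>J. \<forall>n. A n \<subseteq>\<^sup>* B))"

end

theory Submission
  imports Defs
begin

(* A member of Spl is covered by finitely many S A_1, ..., S A_k. Choosing disjoint finite
   sets P and Q that both meet every A_i, no sequence that is the characteristic function of Q
   on P \<union> Q is constant on any A_i. For Q \<subseteq> {..<N} the characteristic sequences of Q of
   length at least N form an infinite subset of S {N..} avoiding the given member; these
   countably many sets witness non* \<le> \<omega>, and the sets S {N..} witness add* \<le> \<omega> and have no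
   common almost-upper bound in Spl, so Spl is not a P-ideal.
   Conversely, an infinite set F of sequences determines a branch x through the tree of
   initial segments with infinitely many extensions in F. An infinite A inside one colour
   class of x, chosen so sparse that each selected member of F ends before the next element of
   A, yields infinitely many members of F in S A; hence finite families never witness non*,
   and they never witness add* since the ideal is closed under finite unions. *)

definition bit_slice :: "bool list set \<Rightarrow> nat \<Rightarrow> bool \<Rightarrow> bool list set" where
  "bit_slice G i b = {\<sigma> \<in> G. i < length \<sigma> \<and> \<sigma> ! i = b}"

fun branch_set :: "bool list set \<Rightarrow> nat \<Rightarrow> bool list set" where
  "branch_set F 0 = F"
| "branch_set F (Suc i) =
     bit_slice (branch_set F i) i (infinite (bit_slice (branch_set F i) i True))"

definition branch :: "bool list set \<Rightarrow> nat \<Rightarrow> bool" where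
  "branch F i = infinite (bit_slice (branch_set F i) i True)"

lemma branch_set_Suc: "branch_set F (Suc i) = bit_slice (branch_set F i) i (branch F i)"
  by (simp add: branch_def)

declare branch_set.simps(2) [simp del]

lemma infinite_bit_slice:
  assumes "infinite G"
  shows "infinite (bit_slice G i (infinite (bit_slice G i True)))"
proof -
  have "finite {\<sigma> :: bool list. length \<sigma> \<le> i}"
    using finite_lists_length_le[of "UNIV :: bool set" i] by simp
  then have "infinite (G - {\<sigma>. length \<sigma> \<le> i})"
    using assms by (rule Diff_infinite_finite)
  moreover have "G - {\<sigma>. length \<sigma> \<le> i} = bit_slice G i True \<union> bit_slice G i False"
    by (auto simp: bit_slice_def)
  ultimately show ?thesis
    by (cases "infinite (bit_slice G i True)") auto
qed

lemma infinite_branch_set: "infinite F \<Longrightarrow> infinite (branch_set F i)"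
  by (induction i) (simp_all add: infinite_bit_slice branch_set.simps(2))

lemma branch_set_subset: "branch_set F i \<subseteq> F"
  by (induction i) (auto simp: branch_set_Suc bit_slice_def)

lemma branch_set_follows_branch:
  "\<sigma> \<in> branch_set F i \<Longrightarrow> j < i \<Longrightarrow> j < length \<sigma> \<and> \<sigma> ! j = branch F j"
  by (induction i) (auto simp: branch_set_Suc bit_slice_def less_Suc_eq)

lemma infinite_nat_sparse_sequence:
  fixes C :: "nat set" and f :: "nat \<Rightarrow> nat"
  assumes "infinite C"
  obtains a where "strict_mono a" "range a \<subseteq> C" "\<And>k. f (a k) < a (Suc k)"
proof -
  have "\<exists>y. y \<in> C \<and> max x (f x) < y" for x
    using assms unfolding infinite_nat_iff_unbounded by (metis max_less_iff_conj)
  then have "\<exists>a. \<forall>k. a k \<in> C \<and> (a k < a (Suc k) \<and> f (a k) < a (Suc k))"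
    by (intro dependent_nat_choice) auto
  then show thesis
    by (metis image_subsetI strict_mono_Suc_iff that)
qed

lemma infinite_Int_S:
  assumes "infinite F"
  obtains A where "infinite A" "infinite (F \<inter> S A)"
proof -
  obtain c where c: "infinite {i. branch F i = c}"
    using pigeonhole_infinite[of UNIV "branch F"] by auto
  have "\<exists>\<sigma>. \<sigma> \<in> branch_set F (Suc i)" for i
    using infinite_branch_set[OF assms] by (metis ex_in_conv infinite_imp_nonempty)
  then obtain \<tau> where \<tau>: "\<And>i. \<tau> i \<in> branch_set F (Suc i)"
    by metis
  have \<tau>_in_F: "\<tau> i \<in> F" for i
    using \<tau> branch_set_subset by blast
  have \<tau>_follows: "j \<le> i \<Longrightarrow> j < length (\<tau> i) \<and> \<tau> i ! j = branch F j" for i j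
    using branch_set_follows_branch[OF \<tau>] by (simp add: less_Suc_eq_le)
  obtain a where a: "strict_mono a" "range a \<subseteq> {i. branch F i = c}"
    and beyond: "\<And>k. length (\<tau> (a k)) < a (Suc k)"
    using infinite_nat_sparse_sequence[OF c, where f = "\<lambda>i. length (\<tau> i)"] by blast
  have \<tau>_in_S: "\<tau> (a k) \<in> S (range a)" for k
  proof -
    have "\<tau> (a k) ! a m = c" if "a m < length (\<tau> (a k))" for m
    proof -
      have "\<not> k < m"
        using that beyond[of k] strict_mono_less_eq[OF a(1), of "Suc k" m] by auto
      then have "\<tau> (a k) ! a m = branch F (a m)"
        using \<tau>_follows strict_mono_less_eq[OF a(1)] by simp
      then show ?thesis
        using a(2) by auto
    qed
    then show ?thesis
      by (auto simp: S_def)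
  qed
  have "inj (\<lambda>k. \<tau> (a k))"
  proof (rule injI)
    have "length (\<tau> (a k)) < length (\<tau> (a (Suc k)))" for k
      using beyond[of k] \<tau>_follows[of "a (Suc k)" "a (Suc k)"] by simp
    then have lengths: "strict_mono (\<lambda>k. length (\<tau> (a k)))"
      by (simp add: strict_mono_Suc_iff)
    fix k l
    assume "\<tau> (a k) = \<tau> (a l)"
    then show "k = l"
      using strict_mono_eq[OF lengths, of k l] by simp
  qed
  then have "infinite (range (\<lambda>k. \<tau> (a k)))"
    by (rule range_inj_infinite)
  moreover have "range (\<lambda>k. \<tau> (a k)) \<subseteq> F \<inter> S (range a)"
    using \<tau>_in_F \<tau>_in_S by blast
  ultimately have "infinite (F \<inter> S (range a))"
    using infinite_super by blast
  moreover have "infinite (range a)"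
    using a(1) range_inj_infinite strict_mono_imp_inj_on by blast
  ultimately show thesis
    using that by blast
qed

lemma ideal_generated_Un:
  assumes "X \<in> ideal_generated G" "Y \<in> ideal_generated G"
  shows "X \<union> Y \<in> ideal_generated G"
proof -
  obtain H\<^sub>X H\<^sub>Y where "finite H\<^sub>X" "H\<^sub>X \<subseteq> G" "X \<subseteq> \<Union>H\<^sub>X" "finite H\<^sub>Y" "H\<^sub>Y \<subseteq> G" "Y \<subseteq> \<Union>H\<^sub>Y"
    using assms unfolding ideal_generated_def by blast
  then have "finite (H\<^sub>X \<union> H\<^sub>Y) \<and> H\<^sub>X \<union> H\<^sub>Y \<subseteq> G \<and> X \<union> Y \<subseteq> \<Union>(H\<^sub>X \<union> H\<^sub>Y)"
    by auto
  then show ?thesis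
    unfolding ideal_generated_def by blast
qed

lemma ideal_generated_Union:
  "finite \<F> \<Longrightarrow> \<F> \<subseteq> ideal_generated G \<Longrightarrow> \<Union>\<F> \<in> ideal_generated G"
proof (induction \<F> rule: finite_induct)
  case empty
  show ?case
    unfolding ideal_generated_def by blast
next
  case (insert X \<F>)
  then show ?case
    by (simp add: ideal_generated_Un)
qed

lemma add_star_family_ideal_generated_infinite:
  assumes "add_star_family (ideal_generated G) \<F>"
  shows "infinite \<F>"
proof
  assume "finite \<F>"
  then have "\<Union>\<F> \<in> ideal_generated G"
    using assms ideal_generated_Union unfolding add_star_family_def by blast
  then obtain F where "F \<in> \<F>" "infinite (F - \<Union>\<F>)"
    using assms unfolding add_star_family_def almost_subset_def by blast
  then show False
    by (metis Diff_eq_empty_iff Union_upper finite.emptyI)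
qed

lemma S_in_Spl: "infinite A \<Longrightarrow> S A \<in> Spl"
  unfolding Spl_def ideal_generated_def by (intro CollectI exI[of _ "{S A}"]) auto

lemma SplE:
  assumes "Y \<in> Spl"
  obtains \<A> where "finite \<A>" "\<And>A. A \<in> \<A> \<Longrightarrow> infinite A" "Y \<subseteq> (\<Union>A\<in>\<A>. S A)"
proof -
  obtain H where H: "finite H" "H \<subseteq> S ` {A. infinite A}" "Y \<subseteq> \<Union>H"
    using assms unfolding Spl_def ideal_generated_def by (auto simp: setcompr_eq_image)
  obtain \<A> where "\<A> \<subseteq> {A. infinite A}" "finite \<A>" "H = S ` \<A>"
    using finite_subset_image[OF H(1,2)] by blast
  then show thesis
    using that H(3) by blast
qed

lemma finite_disjoint_hitting_sets:
  "finite \<A> \<Longrightarrow> \<forall>A\<in>\<A>. infinite A \<Longrightarrow>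
    \<exists>P Q. finite P \<and> finite Q \<and> P \<inter> Q = {} \<and> (\<forall>A\<in>\<A>. P \<inter> A \<noteq> {} \<and> Q \<inter> A \<noteq> {})"
proof (induction \<A> rule: finite_induct)
  case empty
  show ?case by blast
next
  case (insert A \<A>)
  then obtain P Q where PQ: "finite P" "finite Q" "P \<inter> Q = {}"
    "\<forall>A\<in>\<A>. P \<inter> A \<noteq> {} \<and> Q \<inter> A \<noteq> {}"
    by auto
  have "infinite (A - (P \<union> Q))"
    using insert.prems PQ(1,2) by (simp add: Diff_infinite_finite)
  then obtain p where p: "p \<in> A - (P \<union> Q)"
    by (metis ex_in_conv infinite_imp_nonempty)
  have "infinite (A - (P \<union> Q) - {p})"
    using \<open>infinite (A - (P \<union> Q))\<close> by simp
  then obtain q where q: "q \<in> A - (P \<union> Q) - {p}"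
    by (metis ex_in_conv infinite_imp_nonempty)
  show ?case
    by (rule exI[of _ "insert p P"], rule exI[of _ "insert q Q"]) (use PQ p q in auto)
qed

definition char_list :: "nat set \<Rightarrow> nat \<Rightarrow> bool list" where
  "char_list Q L = map (\<lambda>j. j \<in> Q) [0..<L]"

definition char_lists :: "nat set \<Rightarrow> nat \<Rightarrow> bool list set" where
  "char_lists Q N = {char_list Q L | L. N \<le> L}"

lemma length_char_list [simp]: "length (char_list Q L) = L"
  by (simp add: char_list_def)

lemma nth_char_list [simp]: "i < L \<Longrightarrow> char_list Q L ! i = (i \<in> Q)"
  by (simp add: char_list_def)

lemma infinite_char_lists: "infinite (char_lists Q N)"
proof -
  have "inj_on (char_list Q) {N..}"
    by (metis inj_onI length_char_list)
  then have "infinite (char_list Q ` {N..})"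
    using infinite_Ici finite_imageD by blast
  moreover have "char_lists Q N = char_list Q ` {N..}"
    by (auto simp: char_lists_def)
  ultimately show ?thesis
    by simp
qed

lemma char_lists_subset_S_atLeast: "Q \<subseteq> {..<N} \<Longrightarrow> char_lists Q N \<subseteq> S {N..}"
  by (auto simp: char_lists_def S_def)

lemma char_list_notin_S:
  assumes "p \<in> A" "q \<in> A" "p \<notin> Q" "q \<in> Q" "p < L" "q < L"
  shows "char_list Q L \<notin> S A"
proof -
  have "char_list Q L ! p \<noteq> char_list Q L ! q"
    using assms(3-6) by simp
  then show ?thesis
    using assms(1,2,5,6) unfolding S_def by auto
qed

lemma Spl_disjoint_char_lists:
  assumes "Y \<in> Spl"
  obtains Q N where "Q \<subseteq> {..<N}" "char_lists Q N \<inter> Y = {}"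
proof -
  obtain \<A> where \<A>: "finite \<A>" "\<And>A. A \<in> \<A> \<Longrightarrow> infinite A" "Y \<subseteq> (\<Union>A\<in>\<A>. S A)"
    using SplE[OF assms] by blast
  obtain P Q where PQ: "finite P" "finite Q" "P \<inter> Q = {}"
    "\<forall>A\<in>\<A>. P \<inter> A \<noteq> {} \<and> Q \<inter> A \<noteq> {}"
    using finite_disjoint_hitting_sets[of \<A>] \<A>(1,2) by blast
  obtain N where N: "P \<union> Q \<subseteq> {..<N}"
    using finite_nat_bounded[of "P \<union> Q"] PQ(1,2) by blast
  have "char_list Q L \<notin> Y" if "N \<le> L" for L
  proof
    assume "char_list Q L \<in> Y"
    then obtain A where "A \<in> \<A>" "char_list Q L \<in> S A"
      using \<A>(3) by blast
    moreover obtain p q where "p \<in> A" "q \<in> A" "p \<in> P" "q \<in> Q"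
      using PQ(4) \<open>A \<in> \<A>\<close> by blast
    moreover have "p \<notin> Q" "p < L" "q < L"
      using PQ(3) N that \<open>p \<in> P\<close> \<open>q \<in> Q\<close> by auto
    ultimately show False
      using char_list_notin_S by blast
  qed
  then have "char_lists Q N \<inter> Y = {}"
    unfolding char_lists_def by blast
  with N show thesis
    using that by blast
qed

lemma S_atLeast_not_almost_subset:
  assumes "Y \<in> Spl"
  obtains N where "\<not> S {N..} \<subseteq>\<^sup>* Y"
proof -
  obtain Q N where "Q \<subseteq> {..<N}" "char_lists Q N \<inter> Y = {}"
    using assms by (rule Spl_disjoint_char_lists)
  then have "char_lists Q N \<subseteq> S {N..} - Y"
    using char_lists_subset_S_atLeast by blast
  then have "infinite (S {N..} - Y)"
    using infinite_char_lists infinite_super by blast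
  then show thesis
    using that unfolding almost_subset_def by blast
qed

lemma S_atLeast_in_Spl: "S {N..} \<in> Spl"
  using S_in_Spl infinite_Ici by blast

lemma add_star_family_S_atLeast: "add_star_family Spl (range (\<lambda>N. S {N..}))"
  unfolding add_star_family_def
proof (intro conjI ballI)
  show "range (\<lambda>N. S {N..}) \<subseteq> Spl"
    using S_atLeast_in_Spl by blast
  fix Y
  assume "Y \<in> Spl"
  then obtain N where "\<not> S {N..} \<subseteq>\<^sup>* Y"
    using S_atLeast_not_almost_subset by blast
  then show "\<exists>F\<in>range (\<lambda>N. S {N..}). \<not> F \<subseteq>\<^sup>* Y"
    by blast
qed

lemma non_star_family_char_lists: "non_star_family Spl {char_lists Q N | Q N. finite Q}"
  unfolding non_star_family_def
proof (intro conjI ballI)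
  fix F
  assume "F \<in> {char_lists Q N | Q N. finite Q}"
  then show "infinite F"
    using infinite_char_lists by blast
next
  fix Y
  assume "Y \<in> Spl"
  then obtain Q N where "Q \<subseteq> {..<N}" "char_lists Q N \<inter> Y = {}"
    using Spl_disjoint_char_lists by blast
  then have "char_lists Q N \<in> {char_lists Q N | Q N. finite Q}" "finite (char_lists Q N \<inter> Y)"
    using finite_subset[of Q "{..<N}"] by auto
  then show "\<exists>F\<in>{char_lists Q N | Q N. finite Q}. finite (F \<inter> Y)"
    by blast
qed

lemma countable_char_lists: "countable {char_lists Q N | Q N. finite Q}"
proof -
  have "{char_lists Q N | Q N. finite Q} = case_prod char_lists ` (Collect finite \<times> UNIV)"
    by auto
  then show ?thesis
    by (simp add: countable_Collect_finite)
qed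

lemma non_star_family_Spl_infinite:
  assumes "non_star_family Spl \<F>"
  shows "infinite \<F>"
proof
  assume "finite \<F>"
  have "\<forall>F\<in>\<F>. \<exists>A. infinite A \<and> infinite (F \<inter> S A)"
  proof
    fix F
    assume "F \<in> \<F>"
    then have "infinite F"
      using assms unfolding non_star_family_def by blast
    then show "\<exists>A. infinite A \<and> infinite (F \<inter> S A)"
      using infinite_Int_S by blast
  qed
  then obtain A where A: "\<forall>F\<in>\<F>. infinite (A F) \<and> infinite (F \<inter> S (A F))"
    by (rule bchoice [THEN exE])
  have "(\<lambda>F. S (A F)) ` \<F> \<subseteq> Spl"
    using A S_in_Spl by blast
  then have "(\<Union>F\<in>\<F>. S (A F)) \<in> Spl"
    unfolding Spl_def using \<open>finite \<F>\<close> by (intro ideal_generated_Union) simp_all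
  then obtain F where F: "F \<in> \<F>" "finite (F \<inter> (\<Union>F\<in>\<F>. S (A F)))"
    using assms unfolding non_star_family_def by blast
  then have "F \<inter> S (A F) \<subseteq> F \<inter> (\<Union>F\<in>\<F>. S (A F))"
    by blast
  then have "finite (F \<inter> S (A F))"
    using F(2) by (rule finite_subset)
  moreover have "infinite (F \<inter> S (A F))"
    using A F(1) by simp
  ultimately show False
    by contradiction
qed

lemma not_P_ideal_Spl: "\<not> P_ideal Spl"
proof
  assume "P_ideal Spl"
  moreover have "range (\<lambda>N. S {N..}) \<subseteq> Spl"
    using S_atLeast_in_Spl by blast
  ultimately obtain Y where "Y \<in> Spl" "\<And>N. S {N..} \<subseteq>\<^sup>* Y"
    unfolding P_ideal_def by blast
  then show False
    using S_atLeast_not_almost_subset by blast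
qed

theorem mainTheorem11:
  shows "min_card_is_omega (add_star_family Spl)
       \<and> min_card_is_omega (non_star_family Spl)
       \<and> \<not> P_ideal Spl"
proof (intro conjI)
  have "countable (range (\<lambda>N. S {N..}))"
    by simp
  moreover have "add_star_family Spl \<F> \<Longrightarrow> infinite \<F>" for \<F>
    unfolding Spl_def by (rule add_star_family_ideal_generated_infinite)
  ultimately show "min_card_is_omega (add_star_family Spl)"
    unfolding min_card_is_omega_def using add_star_family_S_atLeast by blast
  show "min_card_is_omega (non_star_family Spl)"
    unfolding min_card_is_omega_def
    using non_star_family_char_lists countable_char_lists non_star_family_Spl_infinite by blast
  show "\<not> P_ideal Spl"
    by (rule not_P_ideal_Spl)
qed

end
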